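(* Let $\pi_1,\dots,\pi_K\ge0$ with $\sum_k\pi_k=1$, $g_1,\dots,g_K$ probability densities on $\mathbb{R}^d$, $f=\sum_k\pi_kg_k$, and $x_1,\dots,x_N\in\mathbb{R}^d$ with $0<f(x_n)<\infty$ for all $n$. Let $L\ge1$ and let $Q^{(l)}_k\ge0$ ($k=1,\dots,K$, $l=1,\dots,L$) satisfy $\sum_{l=1}^LQ^{(l)}_k=1$ for every $k$. Define $$\rho_l=\sum_{k=1}^KQ^{(l)}_k\pi_k,\qquad \phi^{(l)}_k=\frac{Q^{(l)}_k\pi_k}{\rho_l},\qquad h_l=\sum_{k=1}^K\phi^{(l)}_kg_k,$$ and assume $\rho_l>0$ and $h_l(x_n)>0$ for all $l,n$ (so $f=\sum_l\rho_lh_l$). Let $$w^{(l)}_n=\frac{\rho_lh_l(x_n)}{f(x_n)},\qquad W_l=\frac1N\sum_{n=1}^Nw^{(l)}_n.$$ Then $$\mathrm{MC}(\{\pi_k,g_k\}_{k=1}^K;\{x_n\}_{n=1}^N)=\mathrm{MC}(\{\rho_l,h_l\}_{l=1}^L;\{x_n\}_{n=1}^N)+\sum_{l=1}^LW_l\cdot\mathrm{MC}(\{\phi^{(l)}_k,g_k\}_{k=1}^K;\{x_n,w^{(l)}_n\}_{n=1}^N).$$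
   Context: For mixture weights $\pi_k\ge 0$ summing to one, densities $g_k$, $f=\sum_k \pi_k g_k$, and data $x_1,\dots,x_N$ with $0<f(x_n)<\infty$ for all $n$, the mixture complexity is $$\mathrm{MC}(\{\pi_k,g_k\}_{k=1}^K;\{x_n\}_{n=1}^N)=\frac1N\sum_{n=1}^N\sum_{k=1}^K\frac{\pi_k g_k(x_n)}{f(x_n)}\log\frac{g_k(x_n)}{f(x_n)},$$ and, for nonnegative data weights $w_1,\dots,w_N$ with $\sum_n w_n>0$, the weighted mixture complexity is $$\mathrm{MC}(\{\pi_k,g_k\}_{k=1}^K;\{x_n,w_n\}_{n=1}^N)=\frac{1}{\sum_{n'=1}^Nw_{n'}}\sum_{n=1}^Nw_n\sum_{k=1}^K\frac{\pi_k g_k(x_n)}{f(x_n)}\log\frac{g_k(x_n)}{f(x_n)},$$ in both cases with the convention that a term with $\pi_k g_k(x_n)=0$ equals $0$. *)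

theory Defs
  imports "HOL-Analysis.Analysis"
begin

text \<open>Mixture components are indexed by k < K, data points by n < N.\<close>

definition mixture :: "nat \<Rightarrow> (nat \<Rightarrow> real) \<Rightarrow> (nat \<Rightarrow> 'a \<Rightarrow> real) \<Rightarrow> 'a \<Rightarrow> real" where
  "mixture K \<pi> g x = (\<Sum>k<K. \<pi> k * g k x)"

text \<open>Summand with the convention that a term with pi_k g_k(x) = 0 equals 0.\<close>
definition mc_term :: "real \<Rightarrow> real \<Rightarrow> real \<Rightarrow> real" where
  "mc_term p gx fx = (if p * gx = 0 then 0 else (p * gx / fx) * ln (gx / fx))"

definition MC :: "nat \<Rightarrow> (nat \<Rightarrow> real) \<Rightarrow> (nat \<Rightarrow> 'a \<Rightarrow> real) \<Rightarrow> nat \<Rightarrow> (nat \<Rightarrow> 'a) \<Rightarrow> real" where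
  "MC K \<pi> g N x = (1 / real N) *
     (\<Sum>n<N. \<Sum>k<K. mc_term (\<pi> k) (g k (x n)) (mixture K \<pi> g (x n)))"

definition MCw :: "nat \<Rightarrow> (nat \<Rightarrow> real) \<Rightarrow> (nat \<Rightarrow> 'a \<Rightarrow> real) \<Rightarrow> nat \<Rightarrow> (nat \<Rightarrow> 'a) \<Rightarrow> (nat \<Rightarrow> real) \<Rightarrow> real" where
  "MCw K \<pi> g N x w = (1 / (\<Sum>n'<N. w n')) *
     (\<Sum>n<N. w n * (\<Sum>k<K. mc_term (\<pi> k) (g k (x n)) (mixture K \<pi> g (x n))))"

definition prob_density :: "('a::euclidean_space \<Rightarrow> real) \<Rightarrow> bool" where
  "prob_density g \<longleftrightarrow> g \<in> borel_measurable lborel \<and> (\<forall>x. 0 \<le> g x) \<and>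
     integrable lborel g \<and> integral\<^sup>L lborel g = 1"

end

theory Submission
  imports Defs
begin

text \<open>Write the joint weight of component k inside group l as c_lk = Q_lk pi_k, and
  T_lk = c_lk g_k(x) / f(x). At a single point x, the term of the group mixture for group l
  contributes T_lk ln(h_l/f) and the weighted term of the within-group mixture contributes
  T_lk ln(g_k/h_l); these add up to T_lk ln(g_k/f). Summing over l, where the c_lk add up
  to pi_k, gives back the term of the original mixture. The identity then holds pointwise
  and is averaged over the data, the within-group average being reweighted by w_l.\<close>

lemma mc_term_eq: "mc_term p gx fx = p * gx / fx * ln (gx / fx)"
  by (simp add: mc_term_def)

lemma mc_term_group_plus_within:
  fixes c G :: "'k \<Rightarrow> real"
  assumes "finite A" and "0 < F" and "0 < r" and "0 < H"
    and G_nonneg: "\<And>k. k \<in> A \<Longrightarrow> 0 \<le> G k"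
    and rH: "r * H = (\<Sum>k\<in>A. c k * G k)"
  shows "mc_term r H F + r * H / F * (\<Sum>k\<in>A. mc_term (c k / r) (G k) H)
           = (\<Sum>k\<in>A. c k * G k / F * ln (G k / F))"
proof -
  have group: "mc_term r H F = (\<Sum>k\<in>A. c k * G k / F * ln (H / F))"
    by (simp add: mc_term_eq rH sum_divide_distrib sum_distrib_right)
  have within: "r * H / F * mc_term (c k / r) (G k) H = c k * G k / F * ln (G k / H)" for k
    using assms(3,4) by (simp add: mc_term_eq field_simps)
  have combine: "c k * G k / F * ln (H / F) + c k * G k / F * ln (G k / H)
          = c k * G k / F * ln (G k / F)" if "k \<in> A" for k
  proof (cases "G k = 0")
    case False
    with G_nonneg[OF that] have "0 < G k" by simp
    with assms(2,4) have "ln (H / F) + ln (G k / H) = ln (G k / F)"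
      by (simp add: ln_div)
    then show ?thesis by (metis distrib_left)
  qed simp
  then show ?thesis
    unfolding group sum_distrib_left within sum.distrib[symmetric] by (rule sum.cong[OF refl])
qed

lemma sum_mc_term_regroup:
  fixes c :: "'l \<Rightarrow> 'k \<Rightarrow> real"
  assumes "finite A" and "finite B" and "0 < F"
    and G_nonneg: "\<And>k. k \<in> A \<Longrightarrow> 0 \<le> G k"
    and c_sum: "\<And>k. k \<in> A \<Longrightarrow> (\<Sum>l\<in>B. c l k) = p k"
    and r_pos: "\<And>l. l \<in> B \<Longrightarrow> 0 < r l" and H_pos: "\<And>l. l \<in> B \<Longrightarrow> 0 < H l"
    and rH: "\<And>l. l \<in> B \<Longrightarrow> r l * H l = (\<Sum>k\<in>A. c l k * G k)"
  shows "(\<Sum>k\<in>A. mc_term (p k) (G k) F)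
           = (\<Sum>l\<in>B. mc_term (r l) (H l) F)
             + (\<Sum>l\<in>B. r l * H l / F * (\<Sum>k\<in>A. mc_term (c l k / r l) (G k) (H l)))"
proof -
  have "(\<Sum>l\<in>B. mc_term (r l) (H l) F)
          + (\<Sum>l\<in>B. r l * H l / F * (\<Sum>k\<in>A. mc_term (c l k / r l) (G k) (H l)))
        = (\<Sum>l\<in>B. \<Sum>k\<in>A. c l k * G k / F * ln (G k / F))"
    unfolding sum.distrib[symmetric]
    using assms(1,3) G_nonneg r_pos H_pos rH by (intro sum.cong refl mc_term_group_plus_within)
  also have "\<dots> = (\<Sum>k\<in>A. (\<Sum>l\<in>B. c l k) * G k / F * ln (G k / F))"
    by (subst sum.swap) (simp add: sum_distrib_right sum_divide_distrib)
  also have "\<dots> = (\<Sum>k\<in>A. mc_term (p k) (G k) F)"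
    by (simp add: c_sum mc_term_eq)
  finally show ?thesis ..
qed

lemma mixture_regroup:
  assumes Q_sum: "\<And>k. k < K \<Longrightarrow> (\<Sum>l<L. Q l k) = 1"
    and rh: "\<And>l. l < L \<Longrightarrow> \<rho> l * h l y = (\<Sum>k<K. Q l k * \<pi> k * g k y)"
  shows "mixture L \<rho> h y = mixture K \<pi> g y"
proof -
  have "mixture L \<rho> h y = (\<Sum>l<L. \<Sum>k<K. Q l k * \<pi> k * g k y)"
    unfolding mixture_def by (simp add: rh)
  also have "\<dots> = (\<Sum>k<K. (\<Sum>l<L. Q l k) * (\<pi> k * g k y))"
    by (subst sum.swap) (simp add: sum_distrib_right mult.assoc)
  finally show ?thesis
    by (simp add: Q_sum mixture_def)
qed

lemma mean_weight_mult_MCw: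
  assumes "(\<Sum>n<N. w n) \<noteq> 0"
  shows "(1 / real N) * (\<Sum>n<N. w n) * MCw K \<pi> g N x w
           = (1 / real N) * (\<Sum>n<N. w n * (\<Sum>k<K. mc_term (\<pi> k) (g k (x n)) (mixture K \<pi> g (x n))))"
  using assms by (simp add: MCw_def)

theorem theorem1:
  fixes K L N :: nat
    and \<pi> :: "nat \<Rightarrow> real"
    and g :: "nat \<Rightarrow> real ^ 'd \<Rightarrow> real"
    and x :: "nat \<Rightarrow> real ^ 'd"
    and Q :: "nat \<Rightarrow> nat \<Rightarrow> real"
    and \<rho> :: "nat \<Rightarrow> real" and \<phi> :: "nat \<Rightarrow> nat \<Rightarrow> real"
    and h :: "nat \<Rightarrow> real ^ 'd \<Rightarrow> real"
    and w :: "nat \<Rightarrow> nat \<Rightarrow> real" and W :: "nat \<Rightarrow> real"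
  assumes pi_nonneg: "\<And>k. k < K \<Longrightarrow> 0 \<le> \<pi> k"
    and pi_sum: "(\<Sum>k<K. \<pi> k) = 1"
    and g_dens: "\<And>k. k < K \<Longrightarrow> prob_density (g k)"
    and N_pos: "N \<ge> 1"
    and f_pos: "\<And>n. n < N \<Longrightarrow> 0 < mixture K \<pi> g (x n)"
    and L_pos: "L \<ge> 1"
    and Q_nonneg: "\<And>k l. k < K \<Longrightarrow> l < L \<Longrightarrow> 0 \<le> Q l k"
    and Q_sum: "\<And>k. k < K \<Longrightarrow> (\<Sum>l<L. Q l k) = 1"
    and rho_def: "\<And>l. \<rho> l = (\<Sum>k<K. Q l k * \<pi> k)"
    and phi_def: "\<And>l k. \<phi> l k = Q l k * \<pi> k / \<rho> l"
    and h_def: "\<And>l y. h l y = (\<Sum>k<K. \<phi> l k * g k y)"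
    and rho_pos: "\<And>l. l < L \<Longrightarrow> 0 < \<rho> l"
    and h_pos: "\<And>l n. l < L \<Longrightarrow> n < N \<Longrightarrow> 0 < h l (x n)"
    and w_def: "\<And>l n. w l n = \<rho> l * h l (x n) / mixture K \<pi> g (x n)"
    and W_def: "\<And>l. W l = (1 / real N) * (\<Sum>n<N. w l n)"
  shows "MC K \<pi> g N x =
           MC L \<rho> h N x + (\<Sum>l<L. W l * MCw K (\<phi> l) g N x (w l))"
proof -
  have g_nonneg: "\<And>k y. k < K \<Longrightarrow> 0 \<le> g k y"
    using g_dens unfolding prob_density_def by blast
  have rho_h: "\<rho> l * h l y = (\<Sum>k<K. Q l k * \<pi> k * g k y)" if "l < L" for l y
    using rho_pos[OF that] by (simp add: h_def phi_def sum_distrib_left)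
  have f_eq: "mixture L \<rho> h y = mixture K \<pi> g y" for y
    using Q_sum rho_h by (rule mixture_regroup)
  have h_eq: "mixture K (\<phi> l) g y = h l y" for l y
    by (simp add: mixture_def h_def)
  have pointwise: "(\<Sum>k<K. mc_term (\<pi> k) (g k (x n)) (mixture K \<pi> g (x n)))
      = (\<Sum>l<L. mc_term (\<rho> l) (h l (x n)) (mixture K \<pi> g (x n)))
        + (\<Sum>l<L. w l n * (\<Sum>k<K. mc_term (\<phi> l k) (g k (x n)) (h l (x n))))" if "n < N" for n
    unfolding w_def phi_def
    by (rule sum_mc_term_regroup[where c = "\<lambda>l k. Q l k * \<pi> k"])
      (use f_pos[OF that] g_nonneg Q_sum rho_pos h_pos[OF _ that] rho_h in
        \<open>auto simp flip: sum_distrib_right\<close>)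
  have W_MCw: "W l * MCw K (\<phi> l) g N x (w l)
      = (1 / real N) * (\<Sum>n<N. w l n * (\<Sum>k<K. mc_term (\<phi> l k) (g k (x n)) (h l (x n))))"
    if "l < L" for l
  proof -
    have "0 < (\<Sum>n<N. w l n)"
      using N_pos rho_pos[OF that] h_pos[OF that] f_pos
      by (intro sum_pos) (auto simp: w_def lessThan_empty_iff)
    then show ?thesis
      unfolding W_def by (subst mean_weight_mult_MCw) (simp_all add: h_eq)
  qed
  show ?thesis
    unfolding MC_def f_eq
    by (simp add: pointwise W_MCw sum.distrib distrib_left sum_distrib_left sum.swap[of _ "{..<L}"])
qed

end
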